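(* Let $\ell^{\infty}$ be the space of bounded real sequences $x=(x_i)_{i\in\mathbb{N}}$, and for $p\in(0,\infty)$, $n\in\mathbb{N}$ let $$\|x\|_{\infty,p,n}:=\sup_{j\in\mathbb{N}}\Big(\frac{1}{n}\sum_{i=j}^{j+(n-1)}|x_i|^{p}\Big)^{1/p}.$$ Let $p\in[1,\infty)$ and $m,n\in\mathbb{N}$ with $n\leq m$. (i) If $n$ is a factor of $m$, i.e. $m=dn$ for some $d\in\mathbb{N}$, then $\|x\|_{\infty,p,m}\leq\|x\|_{\infty,p,n}$ for all $x\in\ell^{\infty}$. (ii) If $n$ is not a factor of $m$, then there exist $x,y\in\ell^{\infty}$ such that $\|x\|_{\infty,p,n}<\|x\|_{\infty,p,m}$ and $\|y\|_{\infty,p,m}<\|y\|_{\infty,p,n}$.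
   Context: $\mathbb{N}=\{1,2,3,\dots\}$. *)

theory Defs
  imports "HOL-Analysis.Analysis"
begin

text \<open>Sequences are indexed by the positive naturals 1,2,3,...; the value at 0 is ignored.
  The norm of the paper: sup over j \<ge> 1 of the p-th root of the mean of |x_i|^p, i = j..j+n-1.\<close>

definition norm_inf_p :: "real \<Rightarrow> nat \<Rightarrow> (nat \<Rightarrow> real) \<Rightarrow> real" where
  "norm_inf_p p n x =
     (SUP j\<in>{1..}. ((1 / real n) * (\<Sum>i=j..j+(n-1). \<bar>x i\<bar> powr p)) powr (1 / p))"

end

theory Submission
  imports Defs
begin

text \<open>
  Let mu_k(j) be the mean of |x_i|^p over the window i = j..j+k-1, so the norm is the sup over j
  of mu_k(j)^(1/p). If m = d n, an m-window splits into d consecutive n-windows, so mu_m(j) is an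
  average of d values mu_n, each at most the p-th power of the n-norm.

  If m = q n + r with 0 < r < n, the n-periodic 0/1 sequence supported on the residues below r has
  mu_n(j) = r/n for every j, while the m-window starting at a multiple of n meets q + 1 full runs
  of ones, so mu_m = (q+1) r / m > r / n. Conversely, the unit impulse at 1 has k-norm
  (1/k)^(1/p), which strictly decreases in k.
\<close>

definition window_mean :: "real \<Rightarrow> nat \<Rightarrow> (nat \<Rightarrow> real) \<Rightarrow> nat \<Rightarrow> real" where
  "window_mean p k x j = (\<Sum>i=j..<j+k. \<bar>x i\<bar> powr p) / real k"

lemma norm_inf_p_eq_SUP_window_mean:
  assumes "k \<ge> 1"
  shows "norm_inf_p p k x = (SUP j\<in>{1..}. window_mean p k x j powr (1/p))"
proof -
  have "{j..j+(k-1)} = {j..<j+k}" for j using assms by auto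
  then show ?thesis unfolding norm_inf_p_def window_mean_def by simp
qed

lemma window_mean_nonneg: "window_mean p k x j \<ge> 0"
  unfolding window_mean_def by (intro divide_nonneg_nonneg sum_nonneg) auto

lemma window_mean_root_le_bound:
  assumes "k \<ge> 1" "p > 0" "\<And>i. \<bar>x i\<bar> \<le> B"
  shows "window_mean p k x j powr (1/p) \<le> B"
proof -
  have B: "B \<ge> 0" using assms(3)[of 0] by linarith
  have "(\<Sum>i=j..<j+k. \<bar>x i\<bar> powr p) \<le> (\<Sum>i=j..<j+k. B powr p)"
    by (intro sum_mono powr_mono2) (use assms in auto)
  then have "window_mean p k x j \<le> B powr p"
    unfolding window_mean_def using assms(1) by (simp add: field_simps)
  then have "window_mean p k x j powr (1/p) \<le> (B powr p) powr (1/p)"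
    by (intro powr_mono2) (use assms window_mean_nonneg in auto)
  also have "\<dots> = B" using assms B by (simp add: powr_powr)
  finally show ?thesis .
qed

lemma window_mean_root_le_norm_inf_p:
  assumes "k \<ge> 1" "p > 0" "Bseq x" "j \<ge> 1"
  shows "window_mean p k x j powr (1/p) \<le> norm_inf_p p k x"
proof -
  obtain B where "\<And>i. \<bar>x i\<bar> \<le> B" using assms(3) unfolding Bseq_def by auto
  then have "bdd_above ((\<lambda>j. window_mean p k x j powr (1/p)) ` {1..})"
    using window_mean_root_le_bound[OF assms(1,2)] by (auto intro!: bdd_aboveI2)
  then show ?thesis
    unfolding norm_inf_p_eq_SUP_window_mean[OF assms(1)] using assms(4) by (intro cSUP_upper) auto
qed

lemma window_mean_le_norm_inf_p_powr:
  assumes "k \<ge> 1" "p > 0" "Bseq x" "j \<ge> 1"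
  shows "window_mean p k x j \<le> norm_inf_p p k x powr p"
proof -
  have "window_mean p k x j = (window_mean p k x j powr (1/p)) powr p"
    using assms window_mean_nonneg[of p k x j] by (simp add: powr_powr)
  also have "\<dots> \<le> norm_inf_p p k x powr p"
    by (intro powr_mono2 window_mean_root_le_norm_inf_p) (use assms in auto)
  finally show ?thesis .
qed

lemma sum_atLeastLessThan_blocks:
  fixes f :: "nat \<Rightarrow> 'a::comm_monoid_add" and j n d :: nat
  shows "sum f {j..<j+n*d} = (\<Sum>k<d. sum f {j+k*n..<j+k*n+n})"
proof (induction d)
  case (Suc d)
  have "sum f {j..<j+n*Suc d} = sum f {j..<j+n*d} + sum f {j+n*d..<j+n*Suc d}"
    by (rule sum.atLeastLessThan_concat[symmetric]) auto
  then show ?case using Suc by (simp add: algebra_simps)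
qed simp

lemma window_mean_mult:
  assumes "n \<ge> 1" "d \<ge> 1"
  shows "window_mean p (n*d) x j = (\<Sum>k<d. window_mean p n x (j+k*n)) / real d"
  unfolding window_mean_def sum_atLeastLessThan_blocks using assms
  by (simp add: sum_divide_distrib field_simps)

theorem norm_inf_p_mult_le:
  assumes "p > 0" "n \<ge> 1" "d \<ge> 1" "Bseq x"
  shows "norm_inf_p p (n*d) x \<le> norm_inf_p p n x"
proof -
  let ?N = "norm_inf_p p n x"
  have "window_mean p n x 1 powr (1/p) \<le> ?N"
    by (rule window_mean_root_le_norm_inf_p) (use assms in auto)
  then have N: "?N \<ge> 0" by (meson order_trans powr_ge_zero)
  have "n*d \<ge> 1" using assms(2,3) by simp
  show ?thesis
    unfolding norm_inf_p_eq_SUP_window_mean[OF \<open>n*d \<ge> 1\<close>]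
  proof (rule cSUP_least)
    fix j :: nat assume j: "j \<in> {1..}"
    have "window_mean p (n*d) x j \<le> (\<Sum>k<d. ?N powr p) / real d"
      unfolding window_mean_mult[OF assms(2,3)]
      by (intro divide_right_mono sum_mono window_mean_le_norm_inf_p_powr) (use assms j in auto)
    also have "\<dots> = ?N powr p" using assms(3) by simp
    finally have "window_mean p (n*d) x j powr (1/p) \<le> (?N powr p) powr (1/p)"
      by (intro powr_mono2) (use window_mean_nonneg assms in auto)
    also have "\<dots> = ?N" using N assms(1) by (simp add: powr_powr)
    finally show "window_mean p (n*d) x j powr (1/p) \<le> ?N" .
  qed auto
qed

lemma sum_window_mod:
  fixes j n :: nat
  assumes "n \<ge> 1"
  shows "(\<Sum>i=j..<j+n. h (i mod n)) = (\<Sum>k<n. h k :: real)"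
proof (induction j)
  case 0 then show ?case by (simp add: atLeast0LessThan)
next
  case (Suc j)
  have "(\<Sum>i=j..<j+n. h (i mod n)) = h (j mod n) + (\<Sum>i=Suc j..<j+n. h (i mod n))"
    using assms by (intro sum.atLeast_Suc_lessThan) auto
  moreover have "(\<Sum>i=Suc j..<Suc j+n. h (i mod n)) = (\<Sum>i=Suc j..<j+n. h (i mod n)) + h ((j+n) mod n)"
    using assms by (simp add: sum.atLeastLessThan_Suc)
  ultimately show ?case using Suc by simp
qed

definition residue_indicator :: "nat \<Rightarrow> nat \<Rightarrow> nat \<Rightarrow> real" where
  "residue_indicator n r i = (if i mod n < r then 1 else 0)"

lemma Bseq_residue_indicator: "Bseq (residue_indicator n r)"
  by (rule BseqI[of 1]) (auto simp: residue_indicator_def)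

lemma sum_window_residue_indicator:
  assumes "n \<ge> 1" "r \<le> n"
  shows "(\<Sum>i=j..<j+n. residue_indicator n r i) = real r"
proof -
  have "{k. k < n \<and> k < r} = {..<r}" using assms(2) by auto
  then show ?thesis
    using sum_window_mod[OF assms(1), where j=j and h="\<lambda>k. if k < r then 1 else 0"]
    by (simp add: residue_indicator_def sum.If_cases Int_def)
qed

lemma window_mean_residue_indicator:
  assumes "p > 0" "n \<ge> 1" "r \<le> n"
  shows "window_mean p n (residue_indicator n r) j = real r / real n"
proof -
  have "\<bar>residue_indicator n r i\<bar> powr p = residue_indicator n r i" for i
    using assms(1) by (simp add: residue_indicator_def)
  then show ?thesis
    unfolding window_mean_def using sum_window_residue_indicator[OF assms(2,3)] by simp
qed

lemma sum_residue_indicator_long_window: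
  assumes "n \<ge> 1" "r \<le> n"
  shows "(\<Sum>i=n..<n+(q*n+r). residue_indicator n r i) = real (q+1) * real r"
proof -
  have blocks: "(\<Sum>i=n..<n+n*q. residue_indicator n r i) = real q * real r"
    unfolding sum_atLeastLessThan_blocks using sum_window_residue_indicator[OF assms] by simp
  have "residue_indicator n r i = 1" if "i \<in> {n+n*q..<n+n*q+r}" for i
  proof -
    define t where "t = i - (q+1)*n"
    have t: "i = t + (q+1)*n" "t < r" using that unfolding t_def by (auto simp: algebra_simps)
    then have "i mod n = t" using assms by (metis mod_mult_self1 mod_less order_less_le_trans)
    then show ?thesis using t by (simp add: residue_indicator_def)
  qed
  then have tail: "(\<Sum>i=n+n*q..<n+n*q+r. residue_indicator n r i) = real r"
    by simp
  have "(\<Sum>i=n..<n+(q*n+r). residue_indicator n r i)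
      = (\<Sum>i=n..<n+n*q. residue_indicator n r i) + (\<Sum>i=n+n*q..<n+n*q+r. residue_indicator n r i)"
    by (subst sum.atLeastLessThan_concat[symmetric]) (auto simp: algebra_simps)
  then show ?thesis using blocks tail by (simp add: algebra_simps)
qed

theorem norm_inf_p_less_if_not_dvd:
  assumes "p > 0" "n \<ge> 1" "\<not> n dvd m"
  shows "norm_inf_p p n (residue_indicator n (m mod n)) < norm_inf_p p m (residue_indicator n (m mod n))"
proof -
  define q r where "q = m div n" and "r = m mod n"
  let ?x = "residue_indicator n r"
  have r: "0 < r" "r < n" using assms(2,3) unfolding r_def by (auto simp: dvd_eq_mod_eq_0)
  have m: "m = q*n + r" unfolding q_def r_def by simp
  then have m1: "m \<ge> 1" using r by simp
  have "\<bar>?x i\<bar> powr p = ?x i" for i using assms(1) by (simp add: residue_indicator_def)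
  then have long: "window_mean p m ?x n = real (q+1) * real r / real m"
    unfolding window_mean_def using sum_residue_indicator_long_window[OF assms(2), of r q] r m(1) by simp
  have "norm_inf_p p n ?x = (real r / real n) powr (1/p)"
    unfolding norm_inf_p_eq_SUP_window_mean[OF assms(2)]
    using window_mean_residue_indicator[OF assms(1,2)] r by simp
  also have "\<dots> < window_mean p m ?x n powr (1/p)"
  proof (intro powr_less_mono2)
    have "real r * real m < real (q+1) * real r * real n" using r unfolding m by (simp add: algebra_simps)
    then show "real r / real n < window_mean p m ?x n"
      unfolding long using assms(2) m1 by (simp add: field_simps)
  qed (use assms(1) in auto)
  also have "\<dots> \<le> norm_inf_p p m ?x"
    using window_mean_root_le_norm_inf_p[OF m1 assms(1) Bseq_residue_indicator] assms(2) by simp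
  finally show ?thesis unfolding r_def .
qed

definition unit_impulse :: "nat \<Rightarrow> real" where
  "unit_impulse i = (if i = 1 then 1 else 0)"

lemma Bseq_unit_impulse: "Bseq unit_impulse"
  by (rule BseqI[of 1]) (auto simp: unit_impulse_def)

lemma norm_inf_p_unit_impulse:
  assumes "k \<ge> 1" "p > 0"
  shows "norm_inf_p p k unit_impulse = (1 / real k) powr (1/p)"
proof -
  let ?y = unit_impulse
  have mean: "window_mean p k ?y j = (if j = 1 then 1 / real k else 0)" if "j \<ge> 1" for j
  proof -
    have "(\<Sum>i=j..<j+k. \<bar>?y i\<bar> powr p) = (\<Sum>i=j..<j+k. ?y i)"
      using assms by (intro sum.cong) (auto simp: unit_impulse_def)
    also have "\<dots> = (if j = 1 then 1 else 0)"
      using that assms by (auto simp: unit_impulse_def sum.delta)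
    finally show ?thesis unfolding window_mean_def by simp
  qed
  have "(1 / real k) powr (1/p) \<le> norm_inf_p p k ?y"
    using window_mean_root_le_norm_inf_p[OF assms Bseq_unit_impulse, of 1] mean[of 1] by simp
  moreover have "norm_inf_p p k ?y \<le> (1 / real k) powr (1/p)"
    unfolding norm_inf_p_eq_SUP_window_mean[OF assms(1)] by (rule cSUP_least) (use mean in auto)
  ultimately show ?thesis by simp
qed

theorem lemma1p3:
  fixes p :: real and m n :: nat
  assumes "p \<ge> 1" and "n \<ge> 1" and "m \<ge> 1" and "n \<le> m"
  shows "(n dvd m \<longrightarrow> (\<forall>x. Bseq x \<longrightarrow> norm_inf_p p m x \<le> norm_inf_p p n x))
       \<and> (\<not> n dvd m \<longrightarrow> (\<exists>x y. Bseq x \<and> Bseq y \<and>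
              norm_inf_p p n x < norm_inf_p p m x \<and> norm_inf_p p m y < norm_inf_p p n y))"
proof -
  have p: "p > 0" using assms(1) by simp
  show ?thesis
  proof (intro conjI impI allI)
    fix x :: "nat \<Rightarrow> real" assume "n dvd m" "Bseq x"
    then obtain d where "m = n*d" "d \<ge> 1" using assms(3) by (auto elim!: dvdE intro: Suc_leI)
    then show "norm_inf_p p m x \<le> norm_inf_p p n x"
      using norm_inf_p_mult_le[OF p assms(2) _ \<open>Bseq x\<close>] by simp
  next
    assume "\<not> n dvd m"
    then have "n < m" using assms(4) by (metis dvd_refl le_neq_implies_less)
    have "norm_inf_p p m unit_impulse < norm_inf_p p n unit_impulse"
      unfolding norm_inf_p_unit_impulse[OF assms(3) p] norm_inf_p_unit_impulse[OF assms(2) p]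
      using \<open>n < m\<close> assms(2) p by (intro powr_less_mono2) (auto simp: field_simps)
    then show "\<exists>x y. Bseq x \<and> Bseq y \<and> norm_inf_p p n x < norm_inf_p p m x
                          \<and> norm_inf_p p m y < norm_inf_p p n y"
      using norm_inf_p_less_if_not_dvd[OF p assms(2) \<open>\<not> n dvd m\<close>]
        Bseq_residue_indicator Bseq_unit_impulse by blast
  qed
qed

end
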